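(* Let $\rho_1,\rho_2$ be two-qubit states and let $\rho'=(I_2\otimes\Lambda^{\mathrm{tel}}_{\rho_2})(\rho_1)$ be the end-to-end state of a non-postselected entanglement swap (the second qubit of $\rho_1$ is teleported using $\rho_2$ as resource). Then $\mathcal B(\rho')=\rho'_{\mathcal B}$, where $\rho'_{\mathcal B}=\sum_k\lambda'_k|\Psi_{(k)}\rangle\langle\Psi_{(k)}|$ is the Bell-diagonal state with $\lambda_0'=\lambda_0\mu_0+\lambda_1\mu_1+\lambda_2\mu_2+\lambda_3\mu_3$, $\lambda_1'=\lambda_0\mu_1+\lambda_1\mu_0+\lambda_2\mu_3+\lambda_3\mu_2$, $\lambda_2'=\lambda_0\mu_2+\lambda_2\mu_0+\lambda_3\mu_1+\lambda_1\mu_3$, $\lambda_3'=\lambda_0\mu_3+\lambda_3\mu_0+\lambda_1\mu_2+\lambda_2\mu_1$, with $(\lambda_0,\dots,\lambda_3)$ and $(\mu_0,\dots,\mu_3)$ the Bell-diagonal elements $\langle\Psi_{(k)}|\rho_1|\Psi_{(k)}\rangle$ and $\langle\Psi_{(k)}|\rho_2|\Psi_{(k)}\rangle$.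
   Context: Bell states: for qubit registers $(R,T)$, $|\Psi_{mn}\rangle_{RT}=(I_R\otimes(X^mZ^n)_T)\tfrac1{\sqrt2}(|00\rangle+|11\rangle)$; $(|\Psi_{(0)}\rangle,\dots,|\Psi_{(3)}\rangle)=(|\Psi_{00}\rangle,|\Psi_{01}\rangle,|\Psi_{10}\rangle,|\Psi_{11}\rangle)$. Bell-diagonal twirl $\mathcal B(\rho)=\tfrac14\sum_{P\in\{I,X,Y,Z\}}(P\otimes P)\rho(P\otimes P)^\dagger=\sum_k\langle\Psi_{(k)}|\rho|\Psi_{(k)}\rangle|\Psi_{(k)}\rangle\langle\Psi_{(k)}|$. Teleportation channel with resource $\rho$ on $AB$, input on $C$: $\Lambda^{\mathrm{tel}}_\rho(\sigma)=\sum_{i,j}(Z^jX^i)_B\langle\Psi_{ij}|_{CA}(\sigma_C\otimes\rho_{AB})|\Psi_{ij}\rangle_{CA}(Z^jX^i)_B^\dagger$; in $(I_2\otimes\Lambda^{\mathrm{tel}}_{\rho_2})(\rho_1)$ it acts (linearly) on the second qubit of $\rho_1$. *)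

theory Defs
  imports "Jordan_Normal_Form.Matrix"
begin

text \<open>Kronecker (tensor) product; the first factor is the most significant index,
  so the two-qubit basis state |ab> has index 2a+b.\<close>
definition tensor_mat :: "complex mat \<Rightarrow> complex mat \<Rightarrow> complex mat" (infixr \<open>\<otimes>\<^sub>k\<close> 71) where
  "A \<otimes>\<^sub>k B = mat (dim_row A * dim_row B) (dim_col A * dim_col B)
     (\<lambda>(i, j). A $$ (i div dim_row B, j div dim_col B) * B $$ (i mod dim_row B, j mod dim_col B))"

definition adj :: "complex mat \<Rightarrow> complex mat" where
  "adj A = mat (dim_col A) (dim_row A) (\<lambda>(i, j). cnj (A $$ (j, i)))"

definition mat_trace :: "complex mat \<Rightarrow> complex" where
  "mat_trace A = (\<Sum>i<dim_row A. A $$ (i, i))"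

definition density_mat :: "nat \<Rightarrow> complex mat \<Rightarrow> bool" where
  "density_mat n \<rho> \<longleftrightarrow> \<rho> \<in> carrier_mat n n \<and>
     (\<forall>v \<in> carrier_vec n. let q = conjugate v \<bullet> (\<rho> *\<^sub>v v) in Im q = 0 \<and> Re q \<ge> 0) \<and>
     mat_trace \<rho> = 1"

definition pauliI :: "complex mat" where "pauliI = 1\<^sub>m 2"
definition pauliX :: "complex mat" where
  "pauliX = mat 2 2 (\<lambda>(i, j). if i \<noteq> j then 1 else 0)"
definition pauliZ :: "complex mat" where
  "pauliZ = mat 2 2 (\<lambda>(i, j). if i = j then (if i = 0 then 1 else -1) else 0)"
definition pauliY :: "complex mat" where
  "pauliY = mat 2 2 (\<lambda>(i, j). if i = 0 \<and> j = 1 then -\<i> else if i = 1 \<and> j = 0 then \<i> else 0)"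

definition ketbra :: "nat \<Rightarrow> nat \<Rightarrow> complex mat" where
  "ketbra a b = mat 2 2 (\<lambda>(i, j). if i = a \<and> j = b then 1 else 0)"

definition phi_plus :: "complex mat" where
  "phi_plus = mat 4 1 (\<lambda>(i, j). if i = 0 \<or> i = 3 then 1 / complex_of_real (sqrt 2) else 0)"

definition bell :: "nat \<Rightarrow> nat \<Rightarrow> complex mat" where
  "bell m n = (pauliI \<otimes>\<^sub>k (pauliX ^\<^sub>m m * pauliZ ^\<^sub>m n)) * phi_plus"

definition bellk :: "nat \<Rightarrow> complex mat" where
  "bellk k = bell (k div 2) (k mod 2)"

definition bell_proj :: "nat \<Rightarrow> complex mat" where
  "bell_proj k = bellk k * adj (bellk k)"

definition bell_coeff :: "complex mat \<Rightarrow> nat \<Rightarrow> complex" where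
  "bell_coeff \<rho> k = (adj (bellk k) * \<rho> * bellk k) $$ (0, 0)"

definition pauli_conj2 :: "complex mat \<Rightarrow> complex mat \<Rightarrow> complex mat" where
  "pauli_conj2 P \<rho> = (P \<otimes>\<^sub>k P) * \<rho> * adj (P \<otimes>\<^sub>k P)"

definition bell_twirl :: "complex mat \<Rightarrow> complex mat" where
  "bell_twirl \<rho> = (1/4 :: complex) \<cdot>\<^sub>m
     (pauli_conj2 pauliI \<rho> + pauli_conj2 pauliX \<rho> + pauli_conj2 pauliY \<rho> + pauli_conj2 pauliZ \<rho>)"

text \<open>One term of the teleportation channel: registers ordered C, A, B;
  (Z^j X^i)_B <Psi_ij|_CA (sigma_C \<otimes> rho_AB) |Psi_ij>_CA (Z^j X^i)_B^dagger.\<close>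
definition tel_term :: "complex mat \<Rightarrow> complex mat \<Rightarrow> nat \<Rightarrow> nat \<Rightarrow> complex mat" where
  "tel_term \<rho> \<sigma> i j =
     (let U = pauliZ ^\<^sub>m j * pauliX ^\<^sub>m i;
          K = adj (bell i j) \<otimes>\<^sub>k pauliI
      in U * (K * (\<sigma> \<otimes>\<^sub>k \<rho>) * adj K) * adj U)"

definition teleport :: "complex mat \<Rightarrow> complex mat \<Rightarrow> complex mat" where
  "teleport \<rho> \<sigma> = tel_term \<rho> \<sigma> 0 0 + tel_term \<rho> \<sigma> 0 1 + tel_term \<rho> \<sigma> 1 0 + tel_term \<rho> \<sigma> 1 1"

definition id_tensor_channel :: "(complex mat \<Rightarrow> complex mat) \<Rightarrow> complex mat \<Rightarrow> complex mat" where
  "id_tensor_channel \<Lambda> \<rho> = mat 4 4 (\<lambda>(r, s).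
     \<Sum>a<2. \<Sum>b<2. \<Sum>c<2. \<Sum>d<2.
       \<rho> $$ (2*a + c, 2*b + d) * (ketbra a b \<otimes>\<^sub>k \<Lambda> (ketbra c d)) $$ (r, s))"

definition swap_state :: "complex mat \<Rightarrow> complex mat \<Rightarrow> complex mat" where
  "swap_state \<rho>1 \<rho>2 = id_tensor_channel (teleport \<rho>2) \<rho>1"

end

theory Submission
  imports Defs
begin

text \<open>Summing over the four Bell outcomes, each followed by its Pauli correction, turns teleportation
  through a resource \<rho> into the Pauli channel \<sigma> \<mapsto> \<Sum>_k \<mu>_k P_k \<sigma> adj P_k, whose weights \<mu>_k are
  the Bell coefficients of \<rho>: the off-diagonal Bell components of the resource cancel in the sum.
  Acting on the second qubit, P_k maps \<Psi>_(a) to \<plusminus>\<Psi>_(a xor k), so the Bell coefficients of the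
  swapped state are the convolution \<lambda>'_a = \<Sum>_k \<mu>_k \<lambda>_(a xor k) over the Klein four-group, and the
  twirl keeps exactly these coefficients.\<close>

lemma sum_lessThan_2: "(\<Sum>k<2. f k) = f 0 + f (1::nat)"
  by (simp add: eval_nat_numeral)

lemma sum_lessThan_4: "(\<Sum>k<4. f k) = f 0 + f 1 + f 2 + f (3::nat)"
  by (simp add: eval_nat_numeral)

lemma sum_lessThan_8: "(\<Sum>k<8. f k) = f 0 + f 1 + f 2 + f 3 + f 4 + f 5 + f 6 + f (7::nat)"
  by (simp add: eval_nat_numeral)

lemma less_2_iff: "(i::nat) < 2 \<longleftrightarrow> i = 0 \<or> i = 1"
  by auto

lemma less_4_iff: "(i::nat) < 4 \<longleftrightarrow> i = 0 \<or> i = 1 \<or> i = 2 \<or> i = 3"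
  by auto

lemma index_mult_mat_sum:
  "dim_col A = dim_row B \<Longrightarrow> i < dim_row A \<Longrightarrow> j < dim_col B \<Longrightarrow>
    (A * B) $$ (i, j) = (\<Sum>k<dim_row B. A $$ (i, k) * B $$ (k, j))"
  by (simp add: scalar_prod_def atLeast0LessThan)

lemma smult_smult_mat: "c \<cdot>\<^sub>m (d \<cdot>\<^sub>m A) = (c * d) \<cdot>\<^sub>m (A :: 'a :: semigroup_mult mat)"
  by (rule eq_matI) (auto simp: mult.assoc)

lemma mult_smult_left_mat: "dim_col A = dim_row B \<Longrightarrow> (c \<cdot>\<^sub>m A) * B = c \<cdot>\<^sub>m (A * B :: 'a :: comm_semiring_0 mat)"
  by (rule eq_matI) auto

lemma mult_smult_right_mat: "dim_col A = dim_row B \<Longrightarrow> A * (c \<cdot>\<^sub>m B) = c \<cdot>\<^sub>m (A * B :: 'a :: comm_semiring_0 mat)"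
  by (rule eq_matI) auto

lemma dim_tensor_mat [simp]:
  "dim_row (A \<otimes>\<^sub>k B) = dim_row A * dim_row B" "dim_col (A \<otimes>\<^sub>k B) = dim_col A * dim_col B"
  by (simp_all add: tensor_mat_def)

lemma index_tensor_mat:
  "i < dim_row A * dim_row B \<Longrightarrow> j < dim_col A * dim_col B \<Longrightarrow>
    (A \<otimes>\<^sub>k B) $$ (i, j) = A $$ (i div dim_row B, j div dim_col B) * B $$ (i mod dim_row B, j mod dim_col B)"
  by (simp add: tensor_mat_def)

lemma tensor_mat_smult_left: "(c \<cdot>\<^sub>m A) \<otimes>\<^sub>k B = c \<cdot>\<^sub>m (A \<otimes>\<^sub>k B)"
proof (rule eq_matI)
  fix i j assume "i < dim_row (c \<cdot>\<^sub>m (A \<otimes>\<^sub>k B))" and "j < dim_col (c \<cdot>\<^sub>m (A \<otimes>\<^sub>k B))"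
  moreover from this have "i div dim_row B < dim_row A" "j div dim_col B < dim_col A"
    by (simp_all add: less_mult_imp_div_less mult.commute)
  ultimately show "((c \<cdot>\<^sub>m A) \<otimes>\<^sub>k B) $$ (i, j) = (c \<cdot>\<^sub>m (A \<otimes>\<^sub>k B)) $$ (i, j)"
    by (simp add: tensor_mat_def)
qed (simp_all add: tensor_mat_def)

lemma tensor_mat_add_right:
  assumes "B \<in> carrier_mat nr nc" "C \<in> carrier_mat nr nc"
  shows "A \<otimes>\<^sub>k (B + C) = A \<otimes>\<^sub>k B + A \<otimes>\<^sub>k C"
proof (rule eq_matI)
  fix i j assume "i < dim_row (A \<otimes>\<^sub>k B + A \<otimes>\<^sub>k C)" "j < dim_col (A \<otimes>\<^sub>k B + A \<otimes>\<^sub>k C)"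
  moreover from this have "nr > 0" "nc > 0"
    using assms by (auto intro!: gr0I)
  ultimately show "(A \<otimes>\<^sub>k (B + C)) $$ (i, j) = (A \<otimes>\<^sub>k B + A \<otimes>\<^sub>k C) $$ (i, j)"
    using assms by (simp add: tensor_mat_def distrib_left)
qed (use assms in simp_all)

lemma tensor_mat_smult_right: "A \<otimes>\<^sub>k (c \<cdot>\<^sub>m B) = c \<cdot>\<^sub>m (A \<otimes>\<^sub>k B)"
proof (rule eq_matI)
  fix i j assume "i < dim_row (c \<cdot>\<^sub>m (A \<otimes>\<^sub>k B))" "j < dim_col (c \<cdot>\<^sub>m (A \<otimes>\<^sub>k B))"
  moreover from this have "dim_row B > 0" "dim_col B > 0"
    by (auto intro!: gr0I)
  ultimately show "(A \<otimes>\<^sub>k (c \<cdot>\<^sub>m B)) $$ (i, j) = (c \<cdot>\<^sub>m (A \<otimes>\<^sub>k B)) $$ (i, j)"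
    by (simp add: tensor_mat_def ac_simps)
qed simp_all

lemma dim_adj [simp]: "dim_row (adj A) = dim_col A" "dim_col (adj A) = dim_row A"
  by (simp_all add: adj_def)

lemma index_adj: "i < dim_col A \<Longrightarrow> j < dim_row A \<Longrightarrow> adj A $$ (i, j) = cnj (A $$ (j, i))"
  by (simp add: adj_def)

lemma adj_smult: "adj (c \<cdot>\<^sub>m A) = cnj c \<cdot>\<^sub>m adj A"
  by (rule eq_matI) (auto simp: adj_def)

lemma carrier_ketbra: "ketbra a b \<in> carrier_mat 2 2"
  by (simp add: ketbra_def)

lemma dim_pauli_matrices [simp]:
  "dim_row pauliI = 2" "dim_col pauliI = 2" "dim_row pauliX = 2" "dim_col pauliX = 2"
  "dim_row pauliY = 2" "dim_col pauliY = 2" "dim_row pauliZ = 2" "dim_col pauliZ = 2"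
  "dim_row (ketbra a b) = 2" "dim_col (ketbra a b) = 2"
  by (simp_all add: pauliI_def pauliX_def pauliY_def pauliZ_def ketbra_def)

lemma pauliX_pow: "pauliX ^\<^sub>m n = mat 2 2 (\<lambda>(i, j). if (i = j) = even n then 1 else 0)"
proof (induction n)
  case (Suc n)
  then show ?case
    by (intro eq_matI) (auto simp: pauliX_def scalar_prod_def atLeast0LessThan sum_lessThan_2)
qed (rule eq_matI, auto)

lemma pauliZ_pow: "pauliZ ^\<^sub>m n = mat 2 2 (\<lambda>(i, j). if i = j then (if i = 0 then 1 else (-1) ^ n) else 0)"
proof (induction n)
  case (Suc n)
  then show ?case
    by (intro eq_matI) (auto simp: pauliZ_def scalar_prod_def atLeast0LessThan sum_lessThan_2)
qed (rule eq_matI, auto simp: pauliZ_def)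

definition bell_vec :: "nat \<Rightarrow> nat \<Rightarrow> complex mat" where
  "bell_vec m n = mat 4 1 (\<lambda>(r, _).
     if even m then (if r = 0 then 1 else if r = 3 then (-1) ^ n else 0)
     else (if r = 1 then 1 else if r = 2 then (-1) ^ n else 0))"

lemma dim_bell_vec [simp]: "dim_row (bell_vec m n) = 4" "dim_col (bell_vec m n) = 1"
  by (simp_all add: bell_vec_def)

abbreviation inv_sqrt2 :: complex where
  "inv_sqrt2 \<equiv> 1 / complex_of_real (sqrt 2)"

lemma of_real_sqrt2_mult_self: "complex_of_real (sqrt 2) * complex_of_real (sqrt 2) = 2"
  by (simp flip: of_real_mult)

lemma bell_eq_smult_bell_vec: "bell m n = inv_sqrt2 \<cdot>\<^sub>m bell_vec m n"
  by (rule eq_matI)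
    (auto simp del: index_mult_mat simp: index_mult_mat(2,3) bell_def bell_vec_def phi_plus_def
      pauliX_pow pauliZ_pow pauliI_def index_mult_mat_sum index_tensor_mat sum_lessThan_2 sum_lessThan_4 less_4_iff)

lemma bell_coeff_eq:
  assumes "X \<in> carrier_mat 4 4"
  shows "bell_coeff X k = (adj (bell_vec (k div 2) (k mod 2)) * X * bell_vec (k div 2) (k mod 2)) $$ (0, 0) / 2"
  using assms
  by (simp add: carrier_matD bell_coeff_def bellk_def bell_eq_smult_bell_vec adj_smult mult_smult_left_mat
      mult_smult_right_mat smult_smult_mat of_real_sqrt2_mult_self)

lemma bell_proj_eq:
  "bell_proj k = (1 / 2) \<cdot>\<^sub>m (bell_vec (k div 2) (k mod 2) * adj (bell_vec (k div 2) (k mod 2)))"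
  by (simp add: bell_proj_def bellk_def bell_eq_smult_bell_vec adj_smult mult_smult_left_mat
      mult_smult_right_mat smult_smult_mat of_real_sqrt2_mult_self mult.commute)

lemma bell_coeff_entries:
  assumes "X \<in> carrier_mat 4 4"
  shows "bell_coeff X 0 = (X $$ (0, 0) + X $$ (0, 3) + X $$ (3, 0) + X $$ (3, 3)) / 2"
    and "bell_coeff X 1 = (X $$ (0, 0) - X $$ (0, 3) - X $$ (3, 0) + X $$ (3, 3)) / 2"
    and "bell_coeff X 2 = (X $$ (1, 1) + X $$ (1, 2) + X $$ (2, 1) + X $$ (2, 2)) / 2"
    and "bell_coeff X 3 = (X $$ (1, 1) - X $$ (1, 2) - X $$ (2, 1) + X $$ (2, 2)) / 2"
  using assms
  by (simp_all del: index_mult_mat add: index_mult_mat(2,3) bell_coeff_eq bell_vec_def index_mult_mat_sum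
      index_adj sum_lessThan_4)

lemma carrier_bellk: "bellk k \<in> carrier_mat 4 1"
  by (intro carrier_matI) (simp_all add: bellk_def bell_def phi_plus_def)

lemma bell_coeff_quadratic_form:
  assumes "X \<in> carrier_mat 4 4"
  shows "bell_coeff X k = (\<Sum>i<4. \<Sum>j<4. cnj (bellk k $$ (i, 0)) * X $$ (i, j) * bellk k $$ (j, 0))"
proof -
  have "bell_coeff X k = (\<Sum>j<4. (\<Sum>i<4. cnj (bellk k $$ (i, 0)) * X $$ (i, j)) * bellk k $$ (j, 0))"
    using assms carrier_bellk[of k]
    by (simp del: index_mult_mat add: index_mult_mat(2,3) bell_coeff_def index_mult_mat_sum index_adj carrier_matD)
  also have "\<dots> = (\<Sum>j<4. \<Sum>i<4. cnj (bellk k $$ (i, 0)) * X $$ (i, j) * bellk k $$ (j, 0))"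
    by (simp only: sum_distrib_right)
  also have "\<dots> = (\<Sum>i<4. \<Sum>j<4. cnj (bellk k $$ (i, 0)) * X $$ (i, j) * bellk k $$ (j, 0))"
    by (rule sum.swap)
  finally show ?thesis .
qed

lemma bell_coeff_add:
  assumes "A \<in> carrier_mat 4 4" "B \<in> carrier_mat 4 4"
  shows "bell_coeff (A + B) k = bell_coeff A k + bell_coeff B k"
  using assms
  by (simp add: bell_coeff_quadratic_form carrier_matD distrib_left distrib_right sum.distrib)

lemma bell_coeff_smult:
  assumes "A \<in> carrier_mat 4 4"
  shows "bell_coeff (c \<cdot>\<^sub>m A) k = c * bell_coeff A k"
  using assms
  by (simp add: bell_coeff_quadratic_form carrier_matD sum_distrib_left ac_simps)

definition pauli :: "nat \<Rightarrow> complex mat" where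
  "pauli k = pauliX ^\<^sub>m (k div 2) * pauliZ ^\<^sub>m (k mod 2)"

lemma dim_pauli [simp]: "dim_row (pauli k) = 2" "dim_col (pauli k) = 2"
  by (simp_all add: pauli_def)

lemma carrier_pauli: "pauli k \<in> carrier_mat 2 2"
  by (intro carrier_matI) simp_all

lemma carrier_pauli_conj: "pauli k * \<sigma> * adj (pauli k) \<in> carrier_mat 2 2"
  by (intro carrier_matI) simp_all

definition pauli_channel :: "(nat \<Rightarrow> complex) \<Rightarrow> complex mat \<Rightarrow> complex mat" where
  "pauli_channel p \<sigma> =
       p 0 \<cdot>\<^sub>m (pauli 0 * \<sigma> * adj (pauli 0)) + p 1 \<cdot>\<^sub>m (pauli 1 * \<sigma> * adj (pauli 1))
     + p 2 \<cdot>\<^sub>m (pauli 2 * \<sigma> * adj (pauli 2)) + p 3 \<cdot>\<^sub>m (pauli 3 * \<sigma> * adj (pauli 3))"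

lemma tel_term_eq:
  assumes "\<rho> \<in> carrier_mat 4 4" "\<sigma> \<in> carrier_mat 2 2"
  shows "tel_term \<rho> \<sigma> i j = (1 / 2) \<cdot>\<^sub>m
    (pauliZ ^\<^sub>m j * pauliX ^\<^sub>m i
     * ((adj (bell_vec i j) \<otimes>\<^sub>k pauliI) * (\<sigma> \<otimes>\<^sub>k \<rho>) * adj (adj (bell_vec i j) \<otimes>\<^sub>k pauliI))
     * adj (pauliZ ^\<^sub>m j * pauliX ^\<^sub>m i))"
  using assms
  by (simp add: carrier_matD tel_term_def Let_def bell_eq_smult_bell_vec adj_smult tensor_mat_smult_left
      mult_smult_left_mat mult_smult_right_mat smult_smult_mat of_real_sqrt2_mult_self)

lemma teleport_eq_pauli_channel:
  assumes \<rho>: "\<rho> \<in> carrier_mat 4 4" and \<sigma>: "\<sigma> \<in> carrier_mat 2 2"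
  shows "teleport \<rho> \<sigma> = pauli_channel (bell_coeff \<rho>) \<sigma>" (is "?L = ?R")
proof (rule eq_matI)
  fix x y assume "x < dim_row ?R" "y < dim_col ?R"
  then have "x < 2" "y < 2"
    by (simp_all add: pauli_channel_def)
  then show "?L $$ (x, y) = ?R $$ (x, y)"
    unfolding less_2_iff pauli_channel_def bell_coeff_entries[OF \<rho>]
    using \<rho> \<sigma>
    by (elim disjE)
      (simp_all del: index_mult_mat add: index_mult_mat(2,3) carrier_matD teleport_def tel_term_eq
        pauli_def pauliX_pow pauliZ_pow bell_vec_def pauliI_def pauliX_def pauliZ_def
        index_mult_mat_sum index_tensor_mat index_adj sum_lessThan_2 sum_lessThan_4 sum_lessThan_8,
       simp_all add: eval_nat_numeral field_simps)
qed (simp_all add: teleport_def tel_term_def Let_def pauli_channel_def)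

lemma id_tensor_channel_cong:
  assumes "\<And>c d. \<Lambda> (ketbra c d) = \<Lambda>' (ketbra c d)"
  shows "id_tensor_channel \<Lambda> \<rho> = id_tensor_channel \<Lambda>' \<rho>"
  by (simp add: id_tensor_channel_def assms)

lemma id_tensor_channel_add:
  assumes "\<And>c d. \<Lambda>1 (ketbra c d) \<in> carrier_mat 2 2"
    and "\<And>c d. \<Lambda>2 (ketbra c d) \<in> carrier_mat 2 2"
  shows "id_tensor_channel (\<lambda>\<sigma>. \<Lambda>1 \<sigma> + \<Lambda>2 \<sigma>) \<rho>
    = id_tensor_channel \<Lambda>1 \<rho> + id_tensor_channel \<Lambda>2 \<rho>"
proof -
  have "dim_row (\<Lambda>2 (ketbra c d)) = 2" "dim_col (\<Lambda>2 (ketbra c d)) = 2" for c d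
    using assms(2) by auto
  then show ?thesis
    using assms
    by (intro eq_matI) (auto simp: id_tensor_channel_def tensor_mat_add_right[where nr = 2 and nc = 2]
        sum.distrib distrib_left)
qed

lemma id_tensor_channel_smult:
  assumes "\<And>c d. \<Lambda> (ketbra c d) \<in> carrier_mat 2 2"
  shows "id_tensor_channel (\<lambda>\<sigma>. k \<cdot>\<^sub>m \<Lambda> \<sigma>) \<rho> = k \<cdot>\<^sub>m id_tensor_channel \<Lambda> \<rho>"
proof -
  have "dim_row (\<Lambda> (ketbra c d)) = 2" "dim_col (\<Lambda> (ketbra c d)) = 2" for c d
    using assms by auto
  then show ?thesis
    by (intro eq_matI) (auto simp: id_tensor_channel_def tensor_mat_smult_right sum_distrib_left ac_simps)
qed

lemma id_tensor_channel_conj: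
  assumes "\<rho> \<in> carrier_mat 4 4" "U \<in> carrier_mat 2 2"
  shows "id_tensor_channel (\<lambda>\<sigma>. U * \<sigma> * adj U) \<rho> = (pauliI \<otimes>\<^sub>k U) * \<rho> * adj (pauliI \<otimes>\<^sub>k U)"
    (is "?L = ?R")
proof (rule eq_matI)
  fix r s assume "r < dim_row ?R" "s < dim_col ?R"
  then have "r < 4" "s < 4"
    using assms by auto
  then show "?L $$ (r, s) = ?R $$ (r, s)"
    unfolding less_4_iff
    using assms
    by (elim disjE)
      (simp_all del: index_mult_mat add: index_mult_mat(2,3) carrier_matD id_tensor_channel_def
        ketbra_def pauliI_def index_mult_mat_sum index_tensor_mat index_adj sum_lessThan_2 sum_lessThan_4,
       simp_all add: eval_nat_numeral field_simps)
qed (use assms in \<open>simp_all add: id_tensor_channel_def\<close>)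

definition pauli_on_second :: "nat \<Rightarrow> complex mat \<Rightarrow> complex mat" where
  "pauli_on_second k \<rho> = (pauliI \<otimes>\<^sub>k pauli k) * \<rho> * adj (pauliI \<otimes>\<^sub>k pauli k)"

lemma carrier_pauli_on_second [simp]: "pauli_on_second k \<rho> \<in> carrier_mat 4 4"
  by (intro carrier_matI) (simp_all add: pauli_on_second_def)

lemma id_tensor_channel_pauli_channel:
  assumes "\<rho> \<in> carrier_mat 4 4"
  shows "id_tensor_channel (pauli_channel p) \<rho> =
       p 0 \<cdot>\<^sub>m pauli_on_second 0 \<rho> + p 1 \<cdot>\<^sub>m pauli_on_second 1 \<rho>
     + p 2 \<cdot>\<^sub>m pauli_on_second 2 \<rho> + p 3 \<cdot>\<^sub>m pauli_on_second 3 \<rho>"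
proof -
  have summand_carrier: "p k \<cdot>\<^sub>m (pauli k * \<sigma> * adj (pauli k)) \<in> carrier_mat 2 2" for k \<sigma>
    by (intro smult_carrier_mat carrier_pauli_conj)
  show ?thesis
    unfolding pauli_channel_def[abs_def]
    by (simp only: id_tensor_channel_add id_tensor_channel_smult summand_carrier add_carrier_mat
        carrier_pauli_conj id_tensor_channel_conj[OF assms carrier_pauli] pauli_on_second_def)
qed

text \<open>adj (I \<otimes> P_k) maps \<Psi>_(a) to \<plusminus>\<Psi>_(a xor k), and the sign cancels in the quadratic form.\<close>

lemma bell_coeff_pauli_on_second:
  assumes \<rho>: "\<rho> \<in> carrier_mat 4 4" and "a < 4" "k < 4"
  shows "bell_coeff (pauli_on_second k \<rho>) a = bell_coeff \<rho> (xor a k)"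
  using assms(2,3) unfolding less_4_iff
  by (elim disjE)
    (simp_all only: xor_self_eq xor.left_neutral xor.right_neutral xor_numerals mult_zero_right add_0_right
      bell_coeff_entries[OF carrier_pauli_on_second] bell_coeff_entries[OF \<rho>],
     simp_all del: index_mult_mat add: index_mult_mat(2,3) pauli_on_second_def pauli_def pauliX_pow pauliZ_pow
      pauliI_def pauliX_def pauliZ_def index_mult_mat_sum index_tensor_mat index_adj sum_lessThan_2 sum_lessThan_4
      carrier_matD[OF \<rho>])

lemma bell_coeff_swap_state:
  assumes "\<rho>1 \<in> carrier_mat 4 4" "\<rho>2 \<in> carrier_mat 4 4" "a < 4"
  shows "bell_coeff (swap_state \<rho>1 \<rho>2) a = (\<Sum>k<4. bell_coeff \<rho>2 k * bell_coeff \<rho>1 (xor a k))"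
proof -
  have "swap_state \<rho>1 \<rho>2 = id_tensor_channel (pauli_channel (bell_coeff \<rho>2)) \<rho>1"
    unfolding swap_state_def
    by (intro id_tensor_channel_cong teleport_eq_pauli_channel assms(2) carrier_ketbra)
  also have "\<dots> =
       bell_coeff \<rho>2 0 \<cdot>\<^sub>m pauli_on_second 0 \<rho>1 + bell_coeff \<rho>2 1 \<cdot>\<^sub>m pauli_on_second 1 \<rho>1
     + bell_coeff \<rho>2 2 \<cdot>\<^sub>m pauli_on_second 2 \<rho>1 + bell_coeff \<rho>2 3 \<cdot>\<^sub>m pauli_on_second 3 \<rho>1"
    by (rule id_tensor_channel_pauli_channel[OF assms(1)])
  finally show ?thesis
    using assms
    by (simp add: bell_coeff_add bell_coeff_smult bell_coeff_pauli_on_second sum_lessThan_4)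
qed

lemma bell_twirl_eq_bell_diagonal:
  assumes X: "X \<in> carrier_mat 4 4"
  shows "bell_twirl X = bell_coeff X 0 \<cdot>\<^sub>m bell_proj 0 + bell_coeff X 1 \<cdot>\<^sub>m bell_proj 1
     + bell_coeff X 2 \<cdot>\<^sub>m bell_proj 2 + bell_coeff X 3 \<cdot>\<^sub>m bell_proj 3" (is "_ = ?B")
proof (rule eq_matI)
  fix i j assume "i < dim_row ?B" "j < dim_col ?B"
  then have "i < 4" "j < 4"
    by (simp_all add: bell_proj_eq)
  then show "bell_twirl X $$ (i, j) = ?B $$ (i, j)"
    unfolding less_4_iff bell_coeff_entries[OF X]
    by (elim disjE)
      (simp_all del: index_mult_mat add: index_mult_mat(2,3) bell_proj_eq bell_vec_def bell_twirl_def pauli_conj2_def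
        pauliI_def pauliX_def pauliY_def pauliZ_def index_mult_mat_sum index_tensor_mat index_adj
        sum_lessThan_2 sum_lessThan_4 carrier_matD[OF X] field_simps)
qed (simp_all add: bell_proj_eq bell_twirl_def pauli_conj2_def carrier_matD[OF X])

theorem corollary2:
  fixes \<rho>1 \<rho>2 :: "complex mat"
  assumes "density_mat 4 \<rho>1" and "density_mat 4 \<rho>2"
  defines "l \<equiv> bell_coeff \<rho>1" and "m \<equiv> bell_coeff \<rho>2"
  shows "bell_twirl (swap_state \<rho>1 \<rho>2) =
      (l 0 * m 0 + l 1 * m 1 + l 2 * m 2 + l 3 * m 3) \<cdot>\<^sub>m bell_proj 0
    + (l 0 * m 1 + l 1 * m 0 + l 2 * m 3 + l 3 * m 2) \<cdot>\<^sub>m bell_proj 1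
    + (l 0 * m 2 + l 2 * m 0 + l 3 * m 1 + l 1 * m 3) \<cdot>\<^sub>m bell_proj 2
    + (l 0 * m 3 + l 3 * m 0 + l 1 * m 2 + l 2 * m 1) \<cdot>\<^sub>m bell_proj 3"
proof -
  have \<rho>1: "\<rho>1 \<in> carrier_mat 4 4" and \<rho>2: "\<rho>2 \<in> carrier_mat 4 4"
    using assms(1,2) by (simp_all add: density_mat_def)
  have swap: "swap_state \<rho>1 \<rho>2 \<in> carrier_mat 4 4"
    by (simp add: swap_state_def id_tensor_channel_def)
  show ?thesis
    unfolding bell_twirl_eq_bell_diagonal[OF swap] l_def m_def
    by (simp add: bell_coeff_swap_state[OF \<rho>1 \<rho>2] sum_lessThan_4 ac_simps)
qed

end
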